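(* Let $n\geq 2$ be an integer, $b:=-n+i$, $D=\{0,m\}$ with $2\le m\le n^2$. Let $\alpha\in E_{n,D}$ and suppose there is exactly one sequence $(\alpha_j)_{j\ge1}$ with $\alpha_j\in\{0,\pm m\}$ and $\alpha=\sum_{j\ge1}\alpha_jb^{-j}$. Let $\gamma:=\sum_{j\ge1}\gamma_jb^{-j}$ where $\gamma_j:=\min(D\cap(D+\alpha_j))$, and let $C(\alpha):=C_{n,D}\cap(C_{n,D}+\alpha)$. (a) If $C(\alpha)$ is self-similar and is the attractor of an IFS (finite family of contracting similarities) containing a similarity of the form $f(x)=rx+(1-r)\gamma$, then $(m-|\alpha_j|)_{j\ge1}$ is strongly eventually periodic. (b) Conversely, if $(m-|\alpha_j|)_{j\ge1}$ is strongly eventually periodic, written as $a_1,\ldots,a_p$ followed by the infinite repetition of $a_1+u_1,\ldots,a_p+u_p$ (with $u_\ell\ge0$), then $C(\alpha)$ is self-similar and is the attractor of the IFS consisting of all maps of the form $$f(x)=b^{-p}\Big(x+\sum_{\ell=1}^p\big(y_\ell b^{p-\ell}+z_\ell b^{-\ell}\big)-\gamma\Big)+\gamma,$$ where for each $\ell$, $y_\ell,z_\ell\in\{0,m\}$ with $y_\ell\le a_\ell$ and $z_\ell\le u_\ell$.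
   Context: $C_{n,D}$ is the attractor of $\{z\mapsto b^{-1}(z+d): d\in D\}$, i.e. $C_{n,D}=\{\sum_{j\ge1}d_jb^{-j}: d_j\in D\}$. $E_{n,D}$ is the attractor of $\{z\mapsto b^{-1}(z+\delta):\delta\in D-D\}$. A set is self-similar if it is the attractor of a finite family of contracting similarities. A sequence $(a_j)_{j\ge1}$ of integers is strongly eventually periodic (SEP) if there exist $p\ge1$, integers $(b_\ell)_{\ell=1}^p$ and nonnegative integers $(c_\ell)_{\ell=1}^p$ such that $(a_j)$ equals $b_1,\ldots,b_p$ followed by the infinite repetition of $b_1+c_1,\ldots,b_p+c_p$. *)

theory Defs
  imports "HOL-Analysis.Analysis"
begin

definition bb :: "nat \<Rightarrow> complex" where
  "bb n = Complex (- real n) 1"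

text \<open>Radix expansion sum_{j>=1} d_j b^{-j}; index 0 of the sequence is ignored.\<close>
definition radix_val :: "nat \<Rightarrow> (nat \<Rightarrow> int) \<Rightarrow> complex" where
  "radix_val n d = (\<Sum>j. of_int (d (Suc j)) / (bb n) ^ (Suc j))"

definition Cset :: "nat \<Rightarrow> int set \<Rightarrow> complex set" where
  "Cset n D = {radix_val n d | d. \<forall>j\<ge>1. d j \<in> D}"

text \<open>E_{n,D}: attractor of the maps z -> b^{-1}(z+delta), delta in D-D,
  i.e. the digit set with digits in D - D.\<close>
definition Eset :: "nat \<Rightarrow> int set \<Rightarrow> complex set" where
  "Eset n D = Cset n {x - y | x y. x \<in> D \<and> y \<in> D}"

definition contracting_similarity :: "(complex \<Rightarrow> complex) \<Rightarrow> bool" where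
  "contracting_similarity f \<longleftrightarrow>
     (\<exists>r. 0 < r \<and> r < 1 \<and> (\<forall>x y. dist (f x) (f y) = r * dist x y))"

definition ifs_attractor :: "(complex \<Rightarrow> complex) set \<Rightarrow> complex set \<Rightarrow> bool" where
  "ifs_attractor F K \<longleftrightarrow> finite F \<and> F \<noteq> {} \<and> (\<forall>f\<in>F. contracting_similarity f) \<and>
     K \<noteq> {} \<and> compact K \<and> K = (\<Union>f\<in>F. f ` K)"

definition self_similar :: "complex set \<Rightarrow> bool" where
  "self_similar K \<longleftrightarrow> (\<exists>F. ifs_attractor F K)"

definition SEP :: "(nat \<Rightarrow> int) \<Rightarrow> bool" where
  "SEP a \<longleftrightarrow> (\<exists>p\<ge>1. \<exists>bs cs :: nat \<Rightarrow> int.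
      (\<forall>l\<in>{1..p}. cs l \<ge> 0) \<and> (\<forall>l\<in>{1..p}. a l = bs l) \<and>
      (\<forall>k\<ge>1. \<forall>l\<in>{1..p}. a (k * p + l) = bs l + cs l))"

end

theory Submission
  imports Defs
begin

text \<open>
  Put \<open>A\<^sub>j = m - |\<alpha>\<^sub>j| \<in> {0, m}\<close>. As \<open>|b| > 2\<close>, expansions with digits in \<open>{0, \<plusminus>m}\<close> are
  unique, so for \<open>z \<in> C(\<alpha>)\<close> the digits of \<open>z\<close> and \<open>z - \<alpha>\<close> differ by \<open>\<alpha>\<^sub>j\<close>; hence
  \<open>C(\<alpha>) = \<gamma> + K\<close> with \<open>K = {\<Sum> e\<^sub>j b\<^bsup>-j\<^esup> : e\<^sub>j \<in> {0, A\<^sub>j}}\<close>.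

  (a) If \<open>K\<close> is invariant under \<open>k \<mapsto> r k\<close> with \<open>|r| < 1\<close>, let \<open>t\<^sub>1\<close> be the first index with
  \<open>A\<^bsub>t\<^sub>1\<^esub> = m\<close>. A small power \<open>s\<close> of \<open>r\<close> maps \<open>m b\<^bsup>-t\<^sub>1\<^esup> \<in> K\<close> to a point of \<open>K\<close> whose
  leading digit sits at some \<open>v > t\<^sub>1\<close>. For every \<open>t\<close> with \<open>A\<^sub>t = m\<close>, the point
  \<open>s m b\<^bsup>-t\<^esup> \<in> K\<close> has the same digits shifted by \<open>t - t\<^sub>1\<close> places, so uniqueness gives
  \<open>A\<^bsub>t + v - t\<^sub>1\<^esub> = m\<close>; a \<open>{0, m}\<close>-valued sequence with this shift property is strongly
  eventually periodic.

  (b) If \<open>A\<close> is strongly eventually periodic with period \<open>p\<close>, an expansion in \<open>K\<close> splits into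
  its first \<open>p\<close> digits, the increments of its second block, and an expansion in \<open>K\<close> shifted
  by \<open>p\<close> places; this exhibits \<open>K\<close> as the union of its images under the maps
  \<open>k \<mapsto> (k + \<dots>) / b\<^sup>p\<close>.
\<close>

section \<open>Radix expansions in base \<open>b = -n + i\<close>\<close>

lemma norm_bb: "cmod (bb n) = sqrt (real n ^ 2 + 1)"
  by (simp add: bb_def complex_norm)

lemma bb_neq_0: "bb n \<noteq> 0"
  by (simp add: bb_def complex_eq_iff)

lemma norm_bb_gt_1: "n \<ge> 1 \<Longrightarrow> 1 < cmod (bb n)"
  by (simp add: norm_bb real_less_rsqrt)

lemma norm_bb_gt_2: "n \<ge> 2 \<Longrightarrow> 2 < cmod (bb n)"
proof -
  assume "n \<ge> 2"
  hence "2 ^ 2 \<le> real n ^ 2" by (intro power_mono) simp_all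
  thus ?thesis by (simp add: norm_bb real_less_rsqrt)
qed

definition radix_term :: "nat \<Rightarrow> (nat \<Rightarrow> int) \<Rightarrow> nat \<Rightarrow> complex" where
  "radix_term n c j = of_int (c (Suc j)) / bb n ^ Suc j"

lemma radix_val_eq_suminf: "radix_val n c = suminf (radix_term n c)"
  by (simp add: radix_val_def radix_term_def[abs_def])

lemma norm_radix_term_le:
  assumes "\<forall>j\<ge>1. \<bar>c j\<bar> \<le> M"
  shows "norm (radix_term n c j) \<le> of_int M * (1 / cmod (bb n)) ^ Suc j"
proof -
  have "\<bar>real_of_int (c (Suc j))\<bar> \<le> of_int M"
    using assms by (metis Suc_eq_plus1 le_add2 of_int_abs of_int_le_iff)
  thus ?thesis
    by (simp add: radix_term_def norm_divide norm_power power_one_over divide_right_mono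
             del: power_Suc)
qed

lemma summable_radix_majorant:
  "n \<ge> 1 \<Longrightarrow> summable (\<lambda>j. of_int M * (1 / cmod (bb n)) ^ Suc j)"
  using norm_bb_gt_1[of n]
  by (intro summable_mult summable_ignore_initial_segment[of _ 1, simplified] summable_geometric)
     (auto simp: divide_simps)

lemma radix_term_sums:
  assumes "n \<ge> 1" "\<forall>j\<ge>1. \<bar>c j\<bar> \<le> M"
  shows "radix_term n c sums radix_val n c"
proof -
  have "summable (radix_term n c)"
    by (rule summable_norm_cancel, rule summable_norm_comparison_test[OF _ summable_radix_majorant])
       (use norm_radix_term_le[OF assms(2)] assms(1) in auto)
  thus ?thesis by (simp add: radix_val_eq_suminf summable_sums)
qed

lemma radix_val_cong: "(\<forall>j\<ge>1. c j = d j) \<Longrightarrow> radix_val n c = radix_val n d"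
  by (simp add: radix_val_def)

lemma radix_val_zero [simp]: "radix_val n (\<lambda>_. 0) = 0"
  by (simp add: radix_val_def)

lemma radix_val_add:
  assumes "n \<ge> 1" "\<forall>j\<ge>1. \<bar>c j\<bar> \<le> M" "\<forall>j\<ge>1. \<bar>d j\<bar> \<le> M'"
  shows "radix_val n (\<lambda>j. c j + d j) = radix_val n c + radix_val n d"
proof -
  have "radix_term n (\<lambda>j. c j + d j) = (\<lambda>j. radix_term n c j + radix_term n d j)"
    by (auto simp: radix_term_def add_divide_distrib)
  thus ?thesis
    using sums_add[OF radix_term_sums[OF assms(1,2)] radix_term_sums[OF assms(1,3)]]
    by (simp add: radix_val_eq_suminf sums_iff)
qed

lemma radix_val_diff:
  assumes "n \<ge> 1" "\<forall>j\<ge>1. \<bar>c j\<bar> \<le> M" "\<forall>j\<ge>1. \<bar>d j\<bar> \<le> M'"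
  shows "radix_val n (\<lambda>j. c j - d j) = radix_val n c - radix_val n d"
proof -
  have "radix_term n (\<lambda>j. c j - d j) = (\<lambda>j. radix_term n c j - radix_term n d j)"
    by (auto simp: radix_term_def diff_divide_distrib)
  thus ?thesis
    using sums_diff[OF radix_term_sums[OF assms(1,2)] radix_term_sums[OF assms(1,3)]]
    by (simp add: radix_val_eq_suminf sums_iff)
qed

lemma radix_val_shift:
  assumes "n \<ge> 1" "\<forall>j\<ge>1. \<bar>w j\<bar> \<le> M"
  shows "radix_val n (\<lambda>j. if j > d then w (j - d) else 0) = radix_val n w / bb n ^ d"
proof -
  let ?g = "radix_term n (\<lambda>j. if j > d then w (j - d) else 0)"
  have "(\<lambda>j. ?g (j + d)) = (\<lambda>j. radix_term n w j / bb n ^ d)"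
    by (auto simp: radix_term_def power_add field_simps bb_neq_0)
  hence "(\<lambda>j. ?g (j + d)) sums (radix_val n w / bb n ^ d)"
    using sums_divide[OF radix_term_sums[OF assms]] by simp
  moreover have "sum ?g {..<d} = 0"
    by (auto simp: radix_term_def intro!: sum.neutral)
  ultimately have "?g sums (radix_val n w / bb n ^ d)"
    using sums_iff_shift[of ?g d] by simp
  thus ?thesis by (simp add: radix_val_eq_suminf sums_iff)
qed

lemma radix_val_finite:
  assumes "\<forall>j>N. c j = 0"
  shows "radix_val n c = (\<Sum>j=1..N. of_int (c j) / bb n ^ j)"
proof -
  have "radix_val n c = sum (radix_term n c) {..<N}"
    unfolding radix_val_eq_suminf
    by (rule suminf_finite) (use assms in \<open>auto simp: radix_term_def\<close>)
  also have "\<dots> = (\<Sum>j=1..N. of_int (c j) / bb n ^ j)"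
    unfolding radix_term_def by (rule sum.reindex_bij_witness[of _ "\<lambda>j. j - 1" Suc]) auto
  finally show ?thesis .
qed

text \<open>The tail behind the leading digit has norm at most \<open>m |b|\<^sup>-\<^sup>v / (|b| - 1)\<close>, which is
  smaller than the leading term exactly because \<open>|b| > 2\<close>.\<close>

lemma norm_radix_val_ge_leading:
  assumes n2: "n \<ge> 2" and bd: "\<forall>j\<ge>1. \<bar>\<delta> j\<bar> \<le> m" and v1: "1 \<le> v"
    and zeros: "\<forall>j. 1 \<le> j \<and> j < v \<longrightarrow> \<delta> j = 0" and lead: "\<bar>\<delta> v\<bar> = m"
  shows "of_int m * (cmod (bb n) - 2) / ((cmod (bb n) - 1) * cmod (bb n) ^ v)
           \<le> cmod (radix_val n \<delta>)"
proof -
  define \<beta> where "\<beta> = cmod (bb n)"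
  define q where "q = 1 / \<beta>"
  have b2: "2 < \<beta>" using norm_bb_gt_2[OF n2] by (simp add: \<beta>_def)
  hence q: "0 < q" "q < 1" by (auto simp: q_def)
  define f where "f = radix_term n \<delta>"
  have f_sums: "f sums radix_val n \<delta>"
    unfolding f_def using n2 bd by (intro radix_term_sums) auto
  obtain v' where v': "v = Suc v'" using v1 by (cases v) auto
  have "sum f {..<v} = of_int (\<delta> v) / bb n ^ v"
    using zeros by (simp add: v' f_def radix_term_def sum.neutral del: power_Suc)
  hence tail_sums: "(\<lambda>i. f (i + v)) sums (radix_val n \<delta> - of_int (\<delta> v) / bb n ^ v)"
    using sums_iff_shift'[of f v] f_sums by simp
  have f_le: "norm (f (i + v)) \<le> of_int m * q ^ Suc v * q ^ i" for i
    using norm_radix_term_le[OF bd, of n "i + v"]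
    by (simp add: f_def q_def \<beta>_def power_add mult_ac)
  have geom: "(\<lambda>i. of_int m * q ^ Suc v * q ^ i) sums (of_int m * q ^ Suc v / (1 - q))"
    using sums_mult[OF geometric_sums, of q "of_int m * q ^ Suc v"] q by simp
  have tail_le: "norm (radix_val n \<delta> - of_int (\<delta> v) / bb n ^ v) \<le> of_int m * q ^ Suc v / (1 - q)"
    by (rule norm_sums_le[OF tail_sums geom f_le])
  have lead_norm: "norm (of_int (\<delta> v) / bb n ^ v) = of_int m * q ^ v"
    using lead by (simp add: norm_divide norm_power q_def \<beta>_def power_one_over flip: of_int_abs)
  have "of_int m * q ^ v - of_int m * q ^ Suc v / (1 - q) \<le> cmod (radix_val n \<delta>)"
    using norm_triangle_ineq2[of "of_int (\<delta> v) / bb n ^ v" "radix_val n \<delta>"] tail_le lead_norm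
    by (simp add: norm_minus_commute)
  moreover have "of_int m * q ^ v - of_int m * q ^ Suc v / (1 - q)
      = of_int m * (\<beta> - 2) / ((\<beta> - 1) * \<beta> ^ v)"
    using b2 by (simp add: q_def field_simps power_one_over)
  ultimately show ?thesis by (simp add: \<beta>_def)
qed

lemma norm_radix_val_ge:
  assumes n2: "n \<ge> 2" and m: "0 < m" and digits: "\<forall>j\<ge>1. \<delta> j \<in> {-m, 0, m}"
    and j: "j \<in> {1..t}" "\<delta> j \<noteq> 0"
  shows "of_int m * (cmod (bb n) - 2) / ((cmod (bb n) - 1) * cmod (bb n) ^ t)
           \<le> cmod (radix_val n \<delta>)"
proof -
  define v where "v = (LEAST v. 1 \<le> v \<and> \<delta> v \<noteq> 0)"
  have v: "1 \<le> v" "\<delta> v \<noteq> 0" "v \<le> t"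
    using LeastI[of "\<lambda>v. 1 \<le> v \<and> \<delta> v \<noteq> 0" j] Least_le[of "\<lambda>v. 1 \<le> v \<and> \<delta> v \<noteq> 0" j] j
    by (auto simp: v_def)
  have zeros: "\<forall>i. 1 \<le> i \<and> i < v \<longrightarrow> \<delta> i = 0"
    unfolding v_def using not_less_Least by blast
  have "\<forall>j\<ge>1. \<bar>\<delta> j\<bar> \<le> m" "\<bar>\<delta> v\<bar> = m"
    using digits m v by auto
  hence "of_int m * (cmod (bb n) - 2) / ((cmod (bb n) - 1) * cmod (bb n) ^ v)
           \<le> cmod (radix_val n \<delta>)"
    using norm_radix_val_ge_leading[OF n2 _ v(1) zeros] by blast
  moreover have "cmod (bb n) ^ v \<le> cmod (bb n) ^ t"
    using norm_bb_gt_2[OF n2] v(3) by (intro power_increasing) auto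
  ultimately show ?thesis
    using norm_bb_gt_2[OF n2] m
    by (smt (verit) divide_left_mono mult_left_mono mult_pos_pos of_int_pos zero_less_power)
qed

lemma radix_val_eq_imp_digits_eq:
  assumes n2: "n \<ge> 2" and m: "0 < m"
    and c: "\<forall>j\<ge>1. c j \<in> {0, m}" and d: "\<forall>j\<ge>1. d j \<in> {0, m}"
    and eq: "radix_val n c = radix_val n d"
  shows "\<forall>j\<ge>1. c j = d j"
proof (rule ccontr)
  assume "\<not> (\<forall>j\<ge>1. c j = d j)"
  then obtain j where j: "j \<in> {1..j}" "c j - d j \<noteq> 0" by auto
  have "\<forall>j\<ge>1. \<bar>c j\<bar> \<le> m" "\<forall>j\<ge>1. \<bar>d j\<bar> \<le> m" using c d m by auto
  hence "radix_val n (\<lambda>j. c j - d j) = 0"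
    using radix_val_diff[of n c m d m] n2 eq by simp
  moreover have "c i - d i \<in> {-m, 0, m}" if "i \<ge> 1" for i
    using c[rule_format, OF that] d[rule_format, OF that] by auto
  ultimately have "of_int m * (cmod (bb n) - 2) / ((cmod (bb n) - 1) * cmod (bb n) ^ j) \<le> 0"
    using norm_radix_val_ge[OF n2 m, of "\<lambda>j. c j - d j", OF _ j] by simp
  moreover have "0 < of_int m * (cmod (bb n) - 2) / ((cmod (bb n) - 1) * cmod (bb n) ^ j)"
    using norm_bb_gt_2[OF n2] m by (intro divide_pos_pos mult_pos_pos zero_less_power) auto
  ultimately show False by linarith
qed

lemma continuous_on_radix_val:
  assumes n: "n \<ge> 1" and bd: "\<forall>c\<in>S. \<forall>j\<ge>1. \<bar>c j\<bar> \<le> M"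
  shows "continuous_on S (radix_val n)"
proof -
  have "continuous_on UNIV (\<lambda>c::nat \<Rightarrow> int. (of_int (c j) :: complex))" for j
    by (rule continuous_on_compose2[OF Topological_Spaces.continuous_on_discrete continuous_on_product_coordinates])
       auto
  hence coord: "continuous_on S (\<lambda>c::nat \<Rightarrow> int. (of_int (c j) :: complex))" for j
    by (rule continuous_on_subset) simp
  have "uniform_limit S (\<lambda>N c. \<Sum>i<N. radix_term n c i) (\<lambda>c. \<Sum>i. radix_term n c i) sequentially"
    using bd norm_radix_term_le summable_radix_majorant[OF n] by (intro Weierstrass_m_test) blast+
  moreover have "continuous_on S (\<lambda>c. \<Sum>i<N. radix_term n c i)" for N
    unfolding radix_term_def by (intro continuous_intros coord) (simp add: bb_neq_0)
  ultimately show ?thesis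
    unfolding radix_val_eq_suminf[abs_def] by (intro uniform_limit_theorem) auto
qed

text \<open>Index \<open>0\<close> of a digit sequence is unconstrained, as \<^const>\<open>radix_val\<close> ignores it.\<close>

definition digit_seqs :: "(nat \<Rightarrow> int) \<Rightarrow> (nat \<Rightarrow> int) set" where
  "digit_seqs A = {e. \<forall>j\<ge>1. e j \<in> {0, A j}}"

definition radix_set :: "nat \<Rightarrow> (nat \<Rightarrow> int) \<Rightarrow> complex set" where
  "radix_set n A = radix_val n ` digit_seqs A"

lemma zero_in_radix_set: "0 \<in> radix_set n A"
  unfolding radix_set_def digit_seqs_def by (rule image_eqI[of _ _ "\<lambda>_. 0"]) auto

lemma compact_radix_set:
  assumes n: "n \<ge> 1" and bd: "\<forall>j\<ge>1. \<bar>A j\<bar> \<le> M"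
  shows "compact (radix_set n A)"
proof -
  define B where "B j = (if j = 0 then {0} else {0, A j})" for j
  have "radix_set n A \<subseteq> radix_val n ` Pi\<^sub>E UNIV B"
  proof
    fix x assume "x \<in> radix_set n A"
    then obtain e where "e \<in> digit_seqs A" "x = radix_val n e" by (auto simp: radix_set_def)
    moreover from this have "x = radix_val n (e(0 := 0))" by (auto intro: radix_val_cong)
    ultimately show "x \<in> radix_val n ` Pi\<^sub>E UNIV B"
      by (intro rev_image_eqI[of "e(0 := 0)"]) (auto simp: B_def digit_seqs_def)
  qed
  moreover have "radix_val n ` Pi\<^sub>E UNIV B \<subseteq> radix_set n A"
    by (auto simp: radix_set_def digit_seqs_def B_def PiE_def Pi_def)
  ultimately have eq: "radix_set n A = radix_val n ` Pi\<^sub>E UNIV B" by blast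
  have "compactin (product_topology (\<lambda>_. euclidean) UNIV) (Pi\<^sub>E UNIV B)"
    by (subst compactin_PiE) (auto simp: B_def compactin_euclidean_iff finite_imp_compact)
  hence "compact (Pi\<^sub>E UNIV B)"
    unfolding euclidean_product_topology compactin_euclidean_iff .
  moreover have "\<bar>c j\<bar> \<le> max M 0" if "c \<in> Pi\<^sub>E UNIV B" "j \<ge> 1" for c j
    using that bd by (auto simp: B_def PiE_iff dest!: spec[of _ j])
  hence "continuous_on (Pi\<^sub>E UNIV B) (radix_val n)"
    by (intro continuous_on_radix_val[OF n]) blast
  ultimately show ?thesis
    unfolding eq by (rule compact_continuous_image[rotated])
qed

section \<open>The intersection \<open>C(\<alpha>)\<close> as a translate of a radix set\<close>

lemma digit_inter_eq:
  fixes m a :: int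
  assumes m: "0 < m" and a: "a \<in> {0, m, -m}"
  shows "{0, m} \<inter> (\<lambda>x. x + a) ` {0, m}
           = (\<lambda>e. e + Min ({0, m} \<inter> (\<lambda>x. x + a) ` {0, m})) ` {0, m - \<bar>a\<bar>}"
proof -
  consider "a = 0" | "a = m" | "a = -m" using a by blast
  thus ?thesis
  proof cases
    case 1
    hence eq: "{0, m} \<inter> (\<lambda>x. x + a) ` {0, m} = {0, m}" by auto
    show ?thesis unfolding eq using 1 m by simp
  next
    case 2
    hence eq: "{0, m} \<inter> (\<lambda>x. x + a) ` {0, m} = {m}" using m by auto
    show ?thesis unfolding eq using 2 m by simp
  next
    case 3
    hence eq: "{0, m} \<inter> (\<lambda>x. x + a) ` {0, m} = {0}" using m by auto
    show ?thesis unfolding eq using 3 m by simp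
  qed
qed

lemma Cset_inter_translate_eq:
  assumes n: "n \<ge> 1" and m: "0 < m"
    and as_digits: "\<forall>j\<ge>1. as j \<in> {0, m, - m}"
    and as_val: "\<alpha> = radix_val n as"
    and as_unique: "\<forall>\<beta>. (\<forall>j\<ge>1. \<beta> j \<in> {0, m, - m}) \<and> radix_val n \<beta> = \<alpha>
                        \<longrightarrow> (\<forall>j\<ge>1. \<beta> j = as j)"
  shows "Cset n {0, m} \<inter> (\<lambda>z. z + \<alpha>) ` Cset n {0, m}
           = radix_val n ` {d. \<forall>j\<ge>1. d j \<in> {0, m} \<inter> (\<lambda>x. x + as j) ` {0, m}}"
proof (intro equalityI subsetI)
  fix x assume "x \<in> Cset n {0, m} \<inter> (\<lambda>z. z + \<alpha>) ` Cset n {0, m}"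
  then obtain d d' where d: "\<forall>j\<ge>1. d j \<in> {0, m}" "x = radix_val n d"
    and d': "\<forall>j\<ge>1. d' j \<in> {0, m}" "x = radix_val n d' + \<alpha>"
    by (auto simp: Cset_def)
  have "\<bar>d j\<bar> \<le> m" "\<bar>d' j\<bar> \<le> m" if "j \<ge> 1" for j
    using d(1)[rule_format, OF that] d'(1)[rule_format, OF that] m by auto
  moreover have "\<alpha> = radix_val n d - radix_val n d'" using d(2) d'(2) by (simp add: algebra_simps)
  ultimately have "radix_val n (\<lambda>j. d j - d' j) = \<alpha>"
    using radix_val_diff[OF n, of d m d' m] by simp
  moreover have "\<forall>j\<ge>1. d j - d' j \<in> {0, m, - m}"
    using d(1) d'(1) by (metis diff_0_right diff_self insertCI insertE singletonD diff_0)
  ultimately have "\<forall>j\<ge>1. d j - d' j = as j"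
    using spec[OF as_unique, of "\<lambda>j. d j - d' j"] by blast
  hence diff: "d j - d' j = as j" if "j \<ge> 1" for j
    using that by blast
  have "d j \<in> {0, m} \<inter> (\<lambda>x. x + as j) ` {0, m}" if "j \<ge> 1" for j
  proof
    show "d j \<in> (\<lambda>x. x + as j) ` {0, m}"
      using d'(1) that by (intro image_eqI[of _ _ "d' j"]) (auto simp: diff[OF that, symmetric])
  qed (use d(1) that in blast)
  thus "x \<in> radix_val n ` {d. \<forall>j\<ge>1. d j \<in> {0, m} \<inter> (\<lambda>x. x + as j) ` {0, m}}"
    unfolding d(2) by blast
next
  fix x assume "x \<in> radix_val n ` {d. \<forall>j\<ge>1. d j \<in> {0, m} \<inter> (\<lambda>x. x + as j) ` {0, m}}"
  then obtain d where d: "\<forall>j\<ge>1. d j \<in> {0, m} \<inter> (\<lambda>x. x + as j) ` {0, m}" "x = radix_val n d"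
    by blast
  have dj: "d j \<in> {0, m}" "d j - as j \<in> {0, m}" if "j \<ge> 1" for j
    using d(1)[rule_format, OF that] by auto
  have "\<bar>d j\<bar> \<le> m" "\<bar>as j\<bar> \<le> m" if "j \<ge> 1" for j
    using dj(1)[OF that] as_digits[rule_format, OF that] m by auto
  hence "x = radix_val n (\<lambda>j. d j - as j) + \<alpha>"
    using radix_val_diff[OF n, of d m as m] d(2) as_val by simp
  moreover have "radix_val n (\<lambda>j. d j - as j) \<in> Cset n {0, m}" "x \<in> Cset n {0, m}"
    using d(2) dj unfolding Cset_def by blast+
  ultimately show "x \<in> Cset n {0, m} \<inter> (\<lambda>z. z + \<alpha>) ` Cset n {0, m}" by blast
qed

lemma radix_val_translated_digits:
  assumes n: "n \<ge> 1" and g: "\<forall>j\<ge>1. \<bar>g j\<bar> \<le> M" and S: "\<forall>j\<ge>1. \<forall>x\<in>S j. \<bar>x\<bar> \<le> M"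
  shows "radix_val n ` {d. \<forall>j\<ge>1. d j \<in> (\<lambda>e. e + g j) ` S j}
           = (\<lambda>k. k + radix_val n g) ` radix_val n ` {e. \<forall>j\<ge>1. e j \<in> S j}"
proof -
  have sum_val: "radix_val n (\<lambda>j. e j + g j) = radix_val n e + radix_val n g"
    if "\<forall>j\<ge>1. e j \<in> S j" for e
    using that S by (intro radix_val_add[OF n _ g, of _ M]) blast
  show ?thesis
  proof (intro equalityI subsetI)
    fix x assume "x \<in> radix_val n ` {d. \<forall>j\<ge>1. d j \<in> (\<lambda>e. e + g j) ` S j}"
    then obtain d where d: "\<forall>j\<ge>1. d j - g j \<in> S j" "x = radix_val n d" by force
    thus "x \<in> (\<lambda>k. k + radix_val n g) ` radix_val n ` {e. \<forall>j\<ge>1. e j \<in> S j}"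
      using sum_val[OF d(1)] by force
  next
    fix x assume "x \<in> (\<lambda>k. k + radix_val n g) ` radix_val n ` {e. \<forall>j\<ge>1. e j \<in> S j}"
    then obtain e where e: "\<forall>j\<ge>1. e j \<in> S j" "x = radix_val n e + radix_val n g" by blast
    thus "x \<in> radix_val n ` {d. \<forall>j\<ge>1. d j \<in> (\<lambda>e. e + g j) ` S j}"
      using sum_val[OF e(1)] by force
  qed
qed

lemma radix_val_inter_digits_eq:
  assumes n: "n \<ge> 1" and m: "0 < m"
    and as_digits: "\<forall>j\<ge>1. as j \<in> {0, m, - m}"
    and \<gamma>_def: "\<gamma> = radix_val n (\<lambda>j. Min ({0, m} \<inter> (\<lambda>x. x + as j) ` {0, m}))"
  shows "radix_val n ` {d. \<forall>j\<ge>1. d j \<in> {0, m} \<inter> (\<lambda>x. x + as j) ` {0, m}}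
           = (\<lambda>k. k + \<gamma>) ` radix_set n (\<lambda>j. m - \<bar>as j\<bar>)"
proof -
  define g where "g j = Min ({0, m} \<inter> (\<lambda>x. x + as j) ` {0, m})" for j
  have inter: "{0, m} \<inter> (\<lambda>x. x + as j) ` {0, m} = (\<lambda>e. e + g j) ` {0, m - \<bar>as j\<bar>}"
    if "j \<ge> 1" for j
    unfolding g_def by (rule digit_inter_eq[OF m]) (use as_digits that in auto)
  have "\<bar>g j\<bar> \<le> m" if "j \<ge> 1" for j
  proof -
    have "0 + g j \<in> {0, m} \<inter> (\<lambda>x. x + as j) ` {0, m}"
      unfolding inter[OF that] by blast
    hence "g j \<in> {0, m}" by simp
    thus ?thesis using m by auto
  qed
  moreover have "\<forall>x\<in>{0, m - \<bar>as j\<bar>}. \<bar>x\<bar> \<le> m" if "j \<ge> 1" for j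
    using as_digits[rule_format, OF that] m by auto
  ultimately have "radix_val n ` {d. \<forall>j\<ge>1. d j \<in> (\<lambda>e. e + g j) ` {0, m - \<bar>as j\<bar>}}
      = (\<lambda>k. k + radix_val n g) ` radix_set n (\<lambda>j. m - \<bar>as j\<bar>)"
    unfolding radix_set_def digit_seqs_def by (intro radix_val_translated_digits[OF n]) blast+
  moreover have "{d. \<forall>j\<ge>1. d j \<in> {0, m} \<inter> (\<lambda>x. x + as j) ` {0, m}}
      = {d. \<forall>j\<ge>1. d j \<in> (\<lambda>e. e + g j) ` {0, m - \<bar>as j\<bar>}}"
    using inter by auto
  ultimately show ?thesis
    unfolding \<gamma>_def g_def[symmetric] by simp
qed

section \<open>Invariance under a similarity centred at \<open>\<gamma>\<close>\<close>

lemma norm_contracting_similarity_affine: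
  assumes "contracting_similarity (\<lambda>x. r * x + c)"
  shows "0 < cmod r" "cmod r < 1"
proof -
  obtain \<rho> where "0 < \<rho>" "\<rho> < 1" "\<forall>x y. dist (r * x + c) (r * y + c) = \<rho> * dist x y"
    using assms unfolding contracting_similarity_def by blast
  moreover from this have "cmod r = \<rho>"
    by (metis dist_add_cancel2 dist_0_norm dist_commute mult.right_neutral mult_zero_right norm_one)
  ultimately show "0 < cmod r" "cmod r < 1" by simp_all
qed

lemma power_digit_in_radix_set:
  assumes "t \<ge> 1" "A t = c"
  shows "of_int c / bb n ^ t \<in> radix_set n A"
proof -
  define e where "e j = (if j = t then c else 0)" for j
  have "radix_val n e = (\<Sum>j=1..t. of_int (e j) / bb n ^ j)"
    by (rule radix_val_finite) (simp add: e_def)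
  also have "\<dots> = (\<Sum>j=1..t. if j = t then of_int c / bb n ^ t else 0)"
    by (rule sum.cong) (simp_all add: e_def)
  also have "\<dots> = of_int c / bb n ^ t"
    using assms(1) by simp
  finally have "radix_val n e = of_int c / bb n ^ t" .
  moreover have "e \<in> digit_seqs A"
    using assms(2) by (simp add: digit_seqs_def e_def)
  ultimately show ?thesis
    unfolding radix_set_def by (metis image_eqI)
qed

lemma digit_seqs_in_digits:
  assumes "e \<in> digit_seqs A" "\<forall>j\<ge>1. A j \<in> {0, m}"
  shows "\<forall>j\<ge>1. e j \<in> {0, m}"
proof (intro allI impI)
  fix j :: nat assume "j \<ge> 1"
  thus "e j \<in> {0, m}"
    using assms(1) assms(2)[rule_format, of j] by (auto simp: digit_seqs_def)
qed

lemma radix_set_div_power_shifts_digit: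
  assumes n2: "n \<ge> 2" and m: "0 < m" and A: "\<forall>j\<ge>1. A j \<in> {0, m}"
    and w: "w \<in> digit_seqs A" and div: "radix_val n w / bb n ^ d \<in> radix_set n A"
    and j: "j \<ge> 1" "w j = m"
  shows "A (j + d) = m"
proof -
  obtain w' where w': "w' \<in> digit_seqs A" "radix_val n w' = radix_val n w / bb n ^ d"
    using div by (auto simp: radix_set_def)
  define sw where "sw i = (if i > d then w (i - d) else 0)" for i
  have w_digits: "\<forall>i\<ge>1. w i \<in> {0, m}" by (rule digit_seqs_in_digits[OF w A])
  hence "\<forall>i\<ge>1. \<bar>w i\<bar> \<le> m" using m by auto
  hence "radix_val n sw = radix_val n w'"
    unfolding sw_def w'(2) using n2 by (intro radix_val_shift) auto
  moreover have "\<forall>i\<ge>1. sw i \<in> {0, m}" using w_digits by (auto simp: sw_def)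
  ultimately have "\<forall>i\<ge>1. sw i = w' i"
    using radix_val_eq_imp_digits_eq[OF n2 m _ digit_seqs_in_digits[OF w'(1) A]] by blast
  hence "w' (j + d) = m" using j by (auto simp: sw_def dest: spec[of _ "j + d"])
  thus ?thesis using w'(1) m j(1) by (auto simp: digit_seqs_def dest: spec[of _ "j + d"])
qed

lemma small_radix_val_late_digit:
  assumes n2: "n \<ge> 2" and m: "0 < m" and w: "\<forall>j\<ge>1. w j \<in> {0, m}"
    and nz: "radix_val n w \<noteq> 0"
    and small: "cmod (radix_val n w)
                  < of_int m * (cmod (bb n) - 2) / ((cmod (bb n) - 1) * cmod (bb n) ^ t)"
  obtains v where "v > t" "w v = m"
proof -
  have "\<not> (\<forall>j\<ge>1. w j = 0)"
    using nz radix_val_cong[of w "\<lambda>_. 0" n] by auto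
  then obtain v where v: "v \<ge> 1" "w v \<noteq> 0" by blast
  have "v \<notin> {1..t}"
    using norm_radix_val_ge[OF n2 m, of w v t] w v small by force
  hence "v > t" using v(1) by simp
  moreover have "w v = m" using w[rule_format, OF v(1)] v(2) by simp
  ultimately show ?thesis by (rule that)
qed

lemma scaling_invariant_radix_set_shift:
  assumes n2: "n \<ge> 2" and m: "0 < m" and A: "\<forall>j\<ge>1. A j \<in> {0, m}"
    and inv: "(\<lambda>k. r * k) ` radix_set n A \<subseteq> radix_set n A"
    and r: "0 < cmod r" "cmod r < 1"
  shows "\<exists>p\<ge>1. \<forall>t\<ge>1. A t = m \<longrightarrow> A (t + p) = m"
proof (cases "\<exists>t\<ge>1. A t = m")
  case False
  thus ?thesis by auto
next
  case True
  define \<beta> where "\<beta> = cmod (bb n)"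
  have \<beta>: "2 < \<beta>" using norm_bb_gt_2[OF n2] by (simp add: \<beta>_def)
  hence "0 < (\<beta> - 2) / (\<beta> - 1)" by simp
  then obtain k where k: "cmod r ^ k < (\<beta> - 2) / (\<beta> - 1)"
    using real_arch_pow_inv[OF _ r(2)] by blast
  define s where "s = r ^ k"
  have s: "s \<noteq> 0" "cmod s < (\<beta> - 2) / (\<beta> - 1)"
    using r(1) k by (auto simp: s_def norm_power)
  have scaled: "s * x \<in> radix_set n A" if "x \<in> radix_set n A" for x
    unfolding s_def by (induction k) (use that inv in \<open>auto simp: mult.assoc\<close>)
  define t1 where "t1 = (LEAST t. t \<ge> 1 \<and> A t = m)"
  have t1: "t1 \<ge> 1" "A t1 = m" "\<And>t. t \<ge> 1 \<Longrightarrow> A t = m \<Longrightarrow> t1 \<le> t"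
    using True LeastI_ex[of "\<lambda>t. t \<ge> 1 \<and> A t = m"] Least_le[of "\<lambda>t. t \<ge> 1 \<and> A t = m"]
    by (auto simp: t1_def)
  obtain w where w: "w \<in> digit_seqs A" "radix_val n w = s * (of_int m / bb n ^ t1)"
    using scaled[OF power_digit_in_radix_set[where A = A, OF t1(1,2)]] by (auto simp: radix_set_def)
  have "cmod (radix_val n w) = cmod s * (of_int m / \<beta> ^ t1)"
    using m by (simp add: w(2) norm_mult norm_divide norm_power \<beta>_def)
  also have "\<dots> < (\<beta> - 2) / (\<beta> - 1) * (of_int m / \<beta> ^ t1)"
    using s(2) m \<beta> by (intro mult_strict_right_mono) auto
  also have "\<dots> = of_int m * (\<beta> - 2) / ((\<beta> - 1) * \<beta> ^ t1)"
    by simp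
  finally obtain v where v: "v > t1" "w v = m"
    using small_radix_val_late_digit[OF n2 m digit_seqs_in_digits[OF w(1) A]] w(2) s(1) m
    by (auto simp: \<beta>_def bb_neq_0)
  show ?thesis
  proof (intro exI[of _ "v - t1"] conjI allI impI)
    fix t :: nat assume t: "t \<ge> 1" "A t = m"
    have "radix_val n w / bb n ^ (t - t1) = s * (of_int m / bb n ^ t)"
      using t1(3)[OF t] by (simp add: w(2) bb_neq_0 power_diff)
    hence "A (v + (t - t1)) = m"
      using radix_set_div_power_shifts_digit[OF n2 m A w(1) _ _ v(2)] v(1)
        scaled[OF power_digit_in_radix_set[where A = A, OF t]] by simp
    thus "A (t + (v - t1)) = m" using v(1) t1(3)[OF t] by (simp add: add.commute)
  qed (use v(1) in simp)
qed

definition SEP_repr :: "nat \<Rightarrow> (nat \<Rightarrow> int) \<Rightarrow> (nat \<Rightarrow> int) \<Rightarrow> (nat \<Rightarrow> int) \<Rightarrow> bool" where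
  "SEP_repr p a u A \<longleftrightarrow> p \<ge> 1 \<and> (\<forall>l\<in>{1..p}. u l \<ge> 0) \<and> (\<forall>l\<in>{1..p}. A l = a l) \<and>
     (\<forall>k\<ge>1. \<forall>l\<in>{1..p}. A (k * p + l) = a l + u l)"

lemma SEP_iff_SEP_repr: "SEP A \<longleftrightarrow> (\<exists>p a u. SEP_repr p a u A)"
  by (auto simp: SEP_def SEP_repr_def)

lemma residue_decomp:
  fixes p j :: nat
  assumes "p \<ge> 1" "j \<ge> 1"
  shows "\<exists>q. \<exists>l\<in>{1..p}. j = q * p + l"
proof (intro exI bexI)
  show "(j - 1) mod p + 1 \<in> {1..p}" using assms(1) by (simp add: Suc_leI)
  show "j = (j - 1) div p * p + ((j - 1) mod p + 1)" using assms(2) by simp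
qed

lemma support_shift_iterate:
  fixes A :: "nat \<Rightarrow> int" and p q t :: nat
  assumes shift: "\<forall>t\<ge>1. A t = m \<longrightarrow> A (t + p) = m" and t: "t \<ge> 1" "A t = m"
  shows "A (t + q * p) = m"
proof (induction q)
  case (Suc q)
  thus ?case using shift t(1) by (auto simp: add.assoc add.commute[of p] dest!: spec[of _ "t + q * p"])
qed (use t in simp)

lemma eventually_constant_along_progression:
  fixes A :: "nat \<Rightarrow> int" and p l :: nat
  assumes A: "\<forall>j\<ge>1. A j \<in> {0, m}" and shift: "\<forall>t\<ge>1. A t = m \<longrightarrow> A (t + p) = m"
    and l: "l \<ge> 1"
  shows "\<forall>\<^sub>F N in sequentially. \<forall>q\<ge>N. A (l + q * p) = A (l + N * p)"
proof (cases "\<exists>q0. A (l + q0 * p) = m")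
  case True
  then obtain q0 where "A (l + q0 * p) = m" by blast
  hence "A (l + q * p) = m" if "q \<ge> q0" for q
    using support_shift_iterate[OF shift, of "l + q0 * p" "q - q0"] l that
    by (simp add: add.assoc flip: add_mult_distrib)
  thus ?thesis unfolding eventually_sequentially by (metis order.trans)
next
  case False
  hence "A (l + q * p) = 0" for q
    using A[rule_format, of "l + q * p"] l by auto
  thus ?thesis by simp
qed

lemma SEP_if_support_shift_closed:
  assumes m: "0 \<le> m" and A: "\<forall>j\<ge>1. A j \<in> {0, m}" and p: "p \<ge> 1"
    and shift: "\<forall>t\<ge>1. A t = m \<longrightarrow> A (t + p) = m"
  shows "SEP A"
proof -
  txt \<open>Every residue class modulo \<open>p\<close> is eventually constant, so \<open>N p\<close> is a period.\<close>
  have "\<forall>\<^sub>F N in sequentially. N \<ge> 1 \<and> (\<forall>l\<in>{1..p}. \<forall>q\<ge>N. A (l + q * p) = A (l + N * p))"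
    using eventually_constant_along_progression[OF A shift]
    by (intro eventually_conj eventually_ge_at_top eventually_ball_finite) auto
  then obtain N where N: "N \<ge> 1" "\<And>l q. l \<in> {1..p} \<Longrightarrow> q \<ge> N \<Longrightarrow> A (l + q * p) = A (l + N * p)"
    unfolding eventually_sequentially by blast
  define P where "P = N * p"
  have "SEP_repr P A (\<lambda>l. A (P + l) - A l) A"
    unfolding SEP_repr_def
  proof (intro conjI ballI allI impI)
    show "P \<ge> 1" using N(1) p by (simp add: P_def)
  next
    fix l assume "l \<in> {1..P}"
    hence "A l = m \<Longrightarrow> A (P + l) = m" "A l \<in> {0, m}" "A (P + l) \<in> {0, m}"
      using support_shift_iterate[OF shift, of l N] A by (auto simp: P_def add.commute)
    thus "A (P + l) - A l \<ge> 0" using m by auto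
  next
    fix k :: nat and l' assume k: "k \<ge> 1" and l': "l' \<in> {1..P}"
    obtain q l where l: "l \<in> {1..p}" "l' = q * p + l"
      using residue_decomp[OF p, of l'] l' by auto
    have "q * p < N * p" using l l' unfolding P_def atLeastAtMost_iff by linarith
    hence "q < N" by simp
    have "N \<le> k * N + q" using k by (metis le_add1 le_trans mult_1 mult_le_mono1)
    hence "A (k * P + l') = A (l + N * p)"
      using N(2)[OF l(1), of "k * N + q"] l(2) by (simp add: P_def algebra_simps)
    also have "\<dots> = A (P + l')"
      using N(2)[OF l(1), of "N + q"] l(2) by (simp add: P_def algebra_simps)
    finally show "A (k * P + l') = A l' + (A (P + l') - A l')" by simp
  qed simp
  thus ?thesis unfolding SEP_iff_SEP_repr by blast
qed

lemma scaling_invariant_if_similarity_invariant: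
  fixes r c :: "'a :: comm_ring_1"
  assumes "(\<lambda>x. r * x + (1 - r) * c) ` (\<lambda>k. k + c) ` K \<subseteq> (\<lambda>k. k + c) ` K"
  shows "(\<lambda>k. r * k) ` K \<subseteq> K"
proof -
  have "(\<lambda>x. r * x + (1 - r) * c) ` (\<lambda>k. k + c) ` K = (\<lambda>k. k + c) ` (\<lambda>k. r * k) ` K"
    unfolding image_image by (rule image_cong) (simp_all add: algebra_simps)
  thus ?thesis using assms by (simp add: inj_image_subset_iff)
qed

lemma SEP_if_similarity_in_ifs:
  assumes n2: "n \<ge> 2" and m: "0 < m" and A: "\<forall>j\<ge>1. A j \<in> {0, m}"
    and F: "ifs_attractor F ((\<lambda>k. k + c) ` radix_set n A)"
    and f: "(\<lambda>x. r * x + (1 - r) * c) \<in> F"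
  shows "SEP A"
proof -
  have contr: "contracting_similarity (\<lambda>x. r * x + (1 - r) * c)"
    and inv: "(\<lambda>x. r * x + (1 - r) * c) ` (\<lambda>k. k + c) ` radix_set n A \<subseteq> (\<lambda>k. k + c) ` radix_set n A"
    using F f unfolding ifs_attractor_def by blast+
  obtain p where "p \<ge> 1" "\<forall>t\<ge>1. A t = m \<longrightarrow> A (t + p) = m"
    using scaling_invariant_radix_set_shift[OF n2 m A scaling_invariant_if_similarity_invariant[OF inv]
        norm_contracting_similarity_affine[OF contr]]
    by blast
  thus "SEP A" using SEP_if_support_shift_closed[OF _ A] m by simp
qed

section \<open>Self-similarity for strongly eventually periodic digit bounds\<close>

definition prepend_block :: "nat \<Rightarrow> (nat \<Rightarrow> int) \<Rightarrow> (nat \<Rightarrow> int) \<Rightarrow> (nat \<Rightarrow> int) \<Rightarrow> nat \<Rightarrow> int" where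
  "prepend_block p y z e j = (if j \<le> p then y j else e (j - p) + (if j \<le> 2 * p then z (j - p) else 0))"

definition block_map :: "nat \<Rightarrow> nat \<Rightarrow> (nat \<Rightarrow> int) \<Rightarrow> (nat \<Rightarrow> int) \<Rightarrow> complex \<Rightarrow> complex" where
  "block_map n p y z k =
     (k + (\<Sum>l=1..p. of_int (y l) * bb n ^ (p - l) + of_int (z l) / bb n ^ l)) / bb n ^ p"

definition admissible_blocks ::
    "int \<Rightarrow> nat \<Rightarrow> (nat \<Rightarrow> int) \<Rightarrow> (nat \<Rightarrow> int) \<Rightarrow> (nat \<Rightarrow> int) \<Rightarrow> (nat \<Rightarrow> int) \<Rightarrow> bool" where
  "admissible_blocks m p a u y z \<longleftrightarrow>
     (\<forall>l\<in>{1..p}. y l \<in> {0, m} \<and> z l \<in> {0, m} \<and> y l \<le> a l \<and> z l \<le> u l)"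

lemma radix_val_prepend_block:
  assumes n: "n \<ge> 1" and e: "\<forall>j\<ge>1. \<bar>e j\<bar> \<le> M"
    and y: "\<forall>l\<in>{1..p}. \<bar>y l\<bar> \<le> M" and z: "\<forall>l\<in>{1..p}. \<bar>z l\<bar> \<le> M"
  shows "radix_val n (prepend_block p y z e) = block_map n p y z (radix_val n e)"
proof -
  define Y where "Y j = (if j \<le> p then y j else 0)" for j
  define Z where "Z j = (if j \<le> p then z j else 0)" for j
  have "0 \<le> M" using e by force
  hence Y_le: "\<forall>j\<ge>1. \<bar>Y j\<bar> \<le> M" and Z_le: "\<forall>j\<ge>1. \<bar>Z j\<bar> \<le> M"
    using y z by (auto simp: Y_def Z_def)
  have eZ_le: "\<forall>j\<ge>1. \<bar>e j + Z j\<bar> \<le> M + M"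
    using e Z_le by (metis abs_triangle_ineq add_mono order_trans)
  have "radix_val n (prepend_block p y z e)
      = radix_val n (\<lambda>j. Y j + (if j > p then e (j - p) + Z (j - p) else 0))"
    by (rule radix_val_cong) (auto simp: prepend_block_def Y_def Z_def)
  also have "\<dots> = radix_val n Y + radix_val n (\<lambda>i. e i + Z i) / bb n ^ p"
    using \<open>0 \<le> M\<close> eZ_le
    by (subst radix_val_add[OF n Y_le, of _ "M + M"]) (auto simp: radix_val_shift[OF n eZ_le])
  also have "\<dots> = (\<Sum>l=1..p. of_int (y l) / bb n ^ l)
      + (radix_val n e + (\<Sum>l=1..p. of_int (z l) / bb n ^ l)) / bb n ^ p"
    unfolding radix_val_add[OF n e Z_le]
    by (simp add: radix_val_finite[of p Y] radix_val_finite[of p Z] Y_def Z_def)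
  also have "\<dots> = block_map n p y z (radix_val n e)"
  proof -
    have "of_int (y l) / bb n ^ l = of_int (y l) * bb n ^ (p - l) / bb n ^ p" if "l \<le> p" for l
      using that by (simp add: bb_neq_0 field_simps flip: power_add)
    hence "(\<Sum>l=1..p. of_int (y l) / bb n ^ l) = (\<Sum>l=1..p. of_int (y l) * bb n ^ (p - l)) / bb n ^ p"
      by (simp add: sum_divide_distrib)
    thus ?thesis by (simp add: block_map_def sum.distrib add_divide_distrib)
  qed
  finally show ?thesis .
qed

lemma SEP_repr_shift:
  assumes R: "SEP_repr p a u A" and j: "j > p"
  shows "A (j + p) = A j"
proof -
  have p: "p \<ge> 1" using R by (simp add: SEP_repr_def)
  obtain q l where l: "l \<in> {1..p}" "j = q * p + l"
    using residue_decomp[OF p, of j] j by auto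
  have q: "q \<ge> 1" using l j by (cases q) auto
  have "\<forall>k\<ge>1. \<forall>l\<in>{1..p}. A (k * p + l) = a l + u l" using R by (simp add: SEP_repr_def)
  hence "A (Suc q * p + l) = A (q * p + l)" using q l(1) by (metis le_SucI)
  thus ?thesis using l(2) by (simp add: add.commute add.left_commute)
qed

lemma SEP_repr_second_block:
  "SEP_repr p a u A \<Longrightarrow> l \<in> {1..p} \<Longrightarrow> A (p + l) = A l + u l"
  unfolding SEP_repr_def by (metis mult_1 order_refl)

lemma prepend_block_in_digit_seqs:
  assumes m: "0 < m" and A: "\<forall>j\<ge>1. A j \<in> {0, m}" and R: "SEP_repr p a u A"
    and yz: "admissible_blocks m p a u y z" and e: "e \<in> digit_seqs A"
  shows "prepend_block p y z e \<in> digit_seqs A"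
  unfolding digit_seqs_def
proof (intro CollectI allI impI)
  fix j :: nat assume j: "j \<ge> 1"
  have Aj: "A j \<in> {0, m}" using A j by blast
  consider "j \<le> p" | "p < j" "j \<le> 2 * p" | "2 * p < j" by linarith
  thus "prepend_block p y z e j \<in> {0, A j}"
  proof cases
    case 1
    hence "y j \<in> {0, m}" "y j \<le> A j" using yz R j by (auto simp: admissible_blocks_def SEP_repr_def)
    thus ?thesis using 1 Aj m by (auto simp: prepend_block_def)
  next
    case 2
    define l where "l = j - p"
    have l: "l \<in> {1..p}" "j = p + l" using 2 by (auto simp: l_def)
    have "e l \<in> {0, A l}" "A l \<in> {0, m}" using e A l(1) by (auto simp: digit_seqs_def)
    moreover have "z l \<in> {0, m}" "z l \<le> u l" "u l \<ge> 0"
      using yz R l(1) by (auto simp: admissible_blocks_def SEP_repr_def)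
    moreover have "A j = A l + u l" using SEP_repr_second_block[OF R l(1)] l(2) by simp
    ultimately show ?thesis using 2 Aj m by (auto simp: prepend_block_def l_def)
  next
    case 3
    hence "e (j - p) \<in> {0, A (j - p)}" using e by (auto simp: digit_seqs_def)
    moreover have "A (j - p) = A j" using SEP_repr_shift[OF R, of "j - p"] 3 by simp
    ultimately show ?thesis using 3 by (simp add: prepend_block_def)
  qed
qed

lemma digit_seqs_split:
  assumes m: "0 < m" and A: "\<forall>j\<ge>1. A j \<in> {0, m}" and R: "SEP_repr p a u A"
    and e: "e \<in> digit_seqs A"
  obtains y z e' where "admissible_blocks m p a u y z" "e' \<in> digit_seqs A"
    "\<forall>j\<ge>1. prepend_block p y z e' j = e j"
proof
  define z where "z l = (if A l = 0 then e (p + l) else 0)" for l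
  define e' where "e' j = (if j \<le> p \<and> A j = 0 then 0 else e (j + p))" for j
  have second: "A l \<in> {0, m}" "A (p + l) = A l + u l" "A (p + l) \<in> {0, m}" "u l \<ge> 0"
    "e l \<in> {0, A l}" "e (p + l) \<in> {0, A (p + l)}" if "l \<in> {1..p}" for l
  proof -
    have l: "l \<ge> 1" "p + l \<ge> 1" using that by auto
    show "A l \<in> {0, m}" "A (p + l) \<in> {0, m}" using A l by blast+
    show "e l \<in> {0, A l}" "e (p + l) \<in> {0, A (p + l)}" using e l by (auto simp: digit_seqs_def)
    show "A (p + l) = A l + u l" by (rule SEP_repr_second_block[OF R that])
    show "u l \<ge> 0" using R that by (simp add: SEP_repr_def)
  qed
  show "admissible_blocks m p a u e z"
    unfolding admissible_blocks_def
  proof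
    fix l assume l: "l \<in> {1..p}"
    have "A l = a l" using R l by (simp add: SEP_repr_def)
    thus "e l \<in> {0, m} \<and> z l \<in> {0, m} \<and> e l \<le> a l \<and> z l \<le> u l"
      using second[OF l] m by (auto simp: z_def)
  qed
  show "e' \<in> digit_seqs A"
    unfolding digit_seqs_def
  proof (intro CollectI allI impI)
    fix j :: nat assume j: "j \<ge> 1"
    show "e' j \<in> {0, A j}"
    proof (cases "j \<le> p")
      case True
      thus ?thesis using second[of j] j m by (auto simp: e'_def add.commute)
    next
      case False
      moreover have "e (j + p) \<in> {0, A (j + p)}" using e j by (simp add: digit_seqs_def)
      ultimately show ?thesis using SEP_repr_shift[OF R, of j] by (simp add: e'_def)
    qed
  qed
  show "\<forall>j\<ge>1. prepend_block p e z e' j = e j"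
    by (auto simp: prepend_block_def z_def e'_def)
qed

lemma radix_set_eq_Union_block_maps:
  assumes n: "n \<ge> 1" and m: "0 < m" and A: "\<forall>j\<ge>1. A j \<in> {0, m}" and R: "SEP_repr p a u A"
  shows "radix_set n A
           = (\<Union>f\<in>{block_map n p y z | y z. admissible_blocks m p a u y z}. f ` radix_set n A)"
proof -
  have le_m: "\<forall>j\<ge>1. \<bar>e j\<bar> \<le> m" if "e \<in> digit_seqs A" for e
    using digit_seqs_in_digits[OF that A] m by force
  have block_map_eq: "block_map n p y z (radix_val n e) = radix_val n (prepend_block p y z e)"
    if "e \<in> digit_seqs A" "admissible_blocks m p a u y z" for e y z
    using that(2) m by (intro radix_val_prepend_block[OF n le_m[OF that(1)], symmetric])
      (auto simp: admissible_blocks_def)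
  show ?thesis
  proof (intro equalityI subsetI)
    fix x assume "x \<in> radix_set n A"
    then obtain e where e: "e \<in> digit_seqs A" "x = radix_val n e" by (auto simp: radix_set_def)
    obtain y z e' where yz: "admissible_blocks m p a u y z" and e': "e' \<in> digit_seqs A"
      and eq: "\<forall>j\<ge>1. prepend_block p y z e' j = e j"
      using digit_seqs_split[OF m A R e(1)] by blast
    have "x = block_map n p y z (radix_val n e')"
      using block_map_eq[OF e' yz] radix_val_cong[OF eq] e(2) by simp
    thus "x \<in> (\<Union>f\<in>{block_map n p y z | y z. admissible_blocks m p a u y z}. f ` radix_set n A)"
      using yz e' by (auto simp: radix_set_def)
  next
    fix x assume "x \<in> (\<Union>f\<in>{block_map n p y z | y z. admissible_blocks m p a u y z}. f ` radix_set n A)"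
    then obtain y z e where yz: "admissible_blocks m p a u y z" and e: "e \<in> digit_seqs A"
      and x: "x = block_map n p y z (radix_val n e)"
      by (auto simp: radix_set_def)
    thus "x \<in> radix_set n A"
      using block_map_eq[OF e yz] prepend_block_in_digit_seqs[OF m A R yz e]
      by (auto simp: radix_set_def)
  qed
qed

lemma ifs_attractor_translate:
  assumes "ifs_attractor F K"
  shows "ifs_attractor ((\<lambda>f x. f (x - c) + c) ` F) ((\<lambda>x. x + c) ` K)"
  unfolding ifs_attractor_def
proof (intro conjI ballI)
  show "finite ((\<lambda>f x. f (x - c) + c) ` F)" "(\<lambda>f x. f (x - c) + c) ` F \<noteq> {}"
    "(\<lambda>x. x + c) ` K \<noteq> {}"
    using assms by (auto simp: ifs_attractor_def)
  show "compact ((\<lambda>x. x + c) ` K)"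
    using assms by (intro compact_continuous_image continuous_intros) (simp add: ifs_attractor_def)
next
  fix g assume "g \<in> (\<lambda>f x. f (x - c) + c) ` F"
  then obtain f where "f \<in> F" and g: "g = (\<lambda>x. f (x - c) + c)" by blast
  obtain r where "0 < r" "r < 1" and r: "\<forall>x y. dist (f x) (f y) = r * dist x y"
    using assms \<open>f \<in> F\<close> unfolding ifs_attractor_def contracting_similarity_def by blast
  have "dist (g x) (g y) = r * dist x y" for x y
    using r[rule_format, of "x - c" "y - c"] by (simp add: g dist_norm)
  thus "contracting_similarity g"
    unfolding contracting_similarity_def using \<open>0 < r\<close> \<open>r < 1\<close> by blast
next
  have "K = (\<Union>f\<in>F. f ` K)" using assms unfolding ifs_attractor_def by blast
  hence "(\<lambda>x. x + c) ` K = (\<lambda>x. x + c) ` (\<Union>f\<in>F. f ` K)" by (rule arg_cong)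
  also have "\<dots> = (\<Union>f\<in>F. (\<lambda>x. x + c) ` f ` K)" by (rule image_UN)
  finally have "(\<lambda>x. x + c) ` K = (\<Union>f\<in>F. (\<lambda>x. x + c) ` f ` K)" .
  moreover have "(\<Union>g\<in>(\<lambda>f x. f (x - c) + c) ` F. g ` (\<lambda>x. x + c) ` K)
      = (\<Union>f\<in>F. (\<lambda>x. x + c) ` f ` K)"
    by (simp add: image_image)
  ultimately show "(\<lambda>x. x + c) ` K = (\<Union>g\<in>(\<lambda>f x. f (x - c) + c) ` F. g ` (\<lambda>x. x + c) ` K)"
    by simp
qed

lemma contracting_similarity_block_map:
  assumes "n \<ge> 1" "p \<ge> 1"
  shows "contracting_similarity (block_map n p y z)"
  unfolding contracting_similarity_def
proof (intro exI[of _ "1 / cmod (bb n) ^ p"] conjI allI)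
  have "1 < cmod (bb n) ^ p" using norm_bb_gt_1 assms by (intro one_less_power) auto
  thus "0 < 1 / cmod (bb n) ^ p" "1 / cmod (bb n) ^ p < 1" by simp_all
  fix x x'
  have "block_map n p y z x - block_map n p y z x' = (x - x') / bb n ^ p"
    by (simp add: block_map_def field_simps bb_neq_0)
  thus "dist (block_map n p y z x) (block_map n p y z x') = 1 / cmod (bb n) ^ p * dist x x'"
    by (simp add: dist_norm norm_divide norm_power)
qed

lemma finite_block_maps: "finite {block_map n p y z | y z. admissible_blocks m p a u y z}"
proof -
  let ?B = "Pi\<^sub>E {1..p} (\<lambda>_. {0, m})"
  have "{block_map n p y z | y z. admissible_blocks m p a u y z}
           \<subseteq> (\<lambda>(y, z). block_map n p y z) ` (?B \<times> ?B)"
  proof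
    fix f assume "f \<in> {block_map n p y z | y z. admissible_blocks m p a u y z}"
    then obtain y z where f: "f = block_map n p y z" and yz: "admissible_blocks m p a u y z"
      by blast
    have "block_map n p y z = block_map n p (restrict y {1..p}) (restrict z {1..p})"
      unfolding block_map_def by (intro ext arg_cong2[where f = "(/)"] arg_cong2[where f = "(+)"] sum.cong) simp_all
    moreover have "(restrict y {1..p}, restrict z {1..p}) \<in> ?B \<times> ?B"
      using yz by (simp add: admissible_blocks_def)
    ultimately show "f \<in> (\<lambda>(y, z). block_map n p y z) ` (?B \<times> ?B)"
      unfolding f by (intro image_eqI[where x = "(restrict y {1..p}, restrict z {1..p})"]) simp_all
  qed
  thus ?thesis by (rule finite_subset) (intro finite_imageI finite_cartesian_product finite_PiE; simp)
qed

lemma ifs_attractor_radix_set: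
  assumes n: "n \<ge> 1" and m: "0 < m" and A: "\<forall>j\<ge>1. A j \<in> {0, m}" and R: "SEP_repr p a u A"
  shows "ifs_attractor {block_map n p y z | y z. admissible_blocks m p a u y z} (radix_set n A)"
  unfolding ifs_attractor_def
proof (intro conjI ballI)
  have "admissible_blocks m p a u (\<lambda>_. 0) (\<lambda>_. 0)"
    unfolding admissible_blocks_def
  proof
    fix l assume l: "l \<in> {1..p}"
    hence "a l = A l" "u l \<ge> 0" "A l \<in> {0, m}" using R A by (auto simp: SEP_repr_def)
    thus "0 \<in> {0, m} \<and> 0 \<in> {0, m} \<and> 0 \<le> a l \<and> 0 \<le> u l" using m by auto
  qed
  thus "{block_map n p y z | y z. admissible_blocks m p a u y z} \<noteq> {}" by blast
  show "\<And>f. f \<in> {block_map n p y z | y z. admissible_blocks m p a u y z} \<Longrightarrow> contracting_similarity f"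
    using contracting_similarity_block_map[OF n] R by (auto simp: SEP_repr_def)
  have "\<bar>A j\<bar> \<le> m" if "j \<ge> 1" for j
    using A[rule_format, OF that] m by auto
  thus "compact (radix_set n A)"
    by (intro compact_radix_set[OF n, of _ m]) blast
qed (use finite_block_maps zero_in_radix_set[of n A] radix_set_eq_Union_block_maps[OF n m A R] in auto)

lemma translate_block_maps:
  "(\<lambda>f x. f (x - c) + c) ` {block_map n p y z | y z. admissible_blocks m p a u y z}
     = {(\<lambda>x. (x + (\<Sum>l=1..p. of_int (y l) * bb n ^ (p - l) + of_int (z l) / bb n ^ l) - c)
               / bb n ^ p + c)
        | y z. admissible_blocks m p a u y z}"
proof -
  have "(\<lambda>f x. f (x - c) + c) ` {block_map n p y z | y z. admissible_blocks m p a u y z}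
      = {(\<lambda>x. block_map n p y z (x - c) + c) | y z. admissible_blocks m p a u y z}"
    by blast
  thus ?thesis by (simp add: block_map_def algebra_simps)
qed

lemma ifs_attractor_translated_radix_set:
  assumes "n \<ge> 1" "0 < m" "\<forall>j\<ge>1. A j \<in> {0, m}" "SEP_repr p a u A"
  shows "ifs_attractor
           {(\<lambda>x. (x + (\<Sum>l=1..p. of_int (y l) * bb n ^ (p - l) + of_int (z l) / bb n ^ l) - c)
                  / bb n ^ p + c)
            | y z. admissible_blocks m p a u y z}
           ((\<lambda>k. k + c) ` radix_set n A)"
  using ifs_attractor_translate[OF ifs_attractor_radix_set[OF assms], of c]
  unfolding translate_block_maps .

lemma ifs_attractor_imp_self_similar: "ifs_attractor F K \<Longrightarrow> self_similar K"
  unfolding self_similar_def by blast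

theorem theorem5p7:
  fixes n :: nat and m :: int and \<alpha> :: complex and as :: "nat \<Rightarrow> int"
    and \<gamma> :: complex and C\<alpha> :: "complex set"
  assumes n2: "n \<ge> 2"
    and m_lo: "2 \<le> m" and m_hi: "m \<le> int n ^ 2"
    and \<alpha>E: "\<alpha> \<in> Eset n {0, m}"
    and as_digits: "\<forall>j\<ge>1. as j \<in> {0, m, - m}"
    and as_val: "\<alpha> = radix_val n as"
    and as_unique: "\<forall>\<beta>. (\<forall>j\<ge>1. \<beta> j \<in> {0, m, - m}) \<and> radix_val n \<beta> = \<alpha>
                        \<longrightarrow> (\<forall>j\<ge>1. \<beta> j = as j)"
    and \<gamma>_def: "\<gamma> = radix_val n (\<lambda>j. Min ({0, m} \<inter> (\<lambda>x. x + as j) ` {0, m}))"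
    and C\<alpha>_def: "C\<alpha> = Cset n {0, m} \<inter> (\<lambda>z. z + \<alpha>) ` Cset n {0, m}"
  shows "((\<exists>F. self_similar C\<alpha> \<and> ifs_attractor F C\<alpha> \<and>
             (\<exists>r. (\<lambda>x. r * x + (1 - r) * \<gamma>) \<in> F))
           \<longrightarrow> SEP (\<lambda>j. m - \<bar>as j\<bar>))
       \<and> (\<forall>(p::nat) (a::nat \<Rightarrow> int) (u::nat \<Rightarrow> int).
            p \<ge> 1 \<and> (\<forall>l\<in>{1..p}. u l \<ge> 0) \<and>
            (\<forall>l\<in>{1..p}. m - \<bar>as l\<bar> = a l) \<and>
            (\<forall>k\<ge>1. \<forall>l\<in>{1..p}. m - \<bar>as (k * p + l)\<bar> = a l + u l)
          \<longrightarrow> self_similar C\<alpha> \<and>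
              ifs_attractor
                {(\<lambda>x. (x + (\<Sum>l=1..p. of_int (y l) * bb n ^ (p - l) + of_int (z l) / bb n ^ l)
                          - \<gamma>) / bb n ^ p + \<gamma>)
                 | y z :: nat \<Rightarrow> int. \<forall>l\<in>{1..p}. y l \<in> {0, m} \<and> z l \<in> {0, m} \<and>
                                             y l \<le> a l \<and> z l \<le> u l}
                C\<alpha>)"
proof -
  have n1: "n \<ge> 1" and m: "0 < m" using n2 m_lo by simp_all
  define A where "A j = m - \<bar>as j\<bar>" for j
  have "A j \<in> {0, m}" if "j \<ge> 1" for j
    using as_digits[rule_format, OF that] m by (auto simp: A_def)
  hence A: "\<forall>j\<ge>1. A j \<in> {0, m}" by blast
  have C: "C\<alpha> = (\<lambda>k. k + \<gamma>) ` radix_set n A"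
    unfolding C\<alpha>_def A_def
    using Cset_inter_translate_eq[OF n1 m as_digits as_val as_unique]
      radix_val_inter_digits_eq[OF n1 m as_digits \<gamma>_def]
    by simp
  note part_a = SEP_if_similarity_in_ifs[OF n2 m A, where c = \<gamma>, folded C, unfolded A_def]
  note part_b = ifs_attractor_translated_radix_set[OF n1 m A, where c = \<gamma>, folded C,
      unfolded admissible_blocks_def SEP_repr_def A_def]
  show ?thesis
  proof (rule conjI; intro impI allI)
    assume "\<exists>F. self_similar C\<alpha> \<and> ifs_attractor F C\<alpha> \<and> (\<exists>r. (\<lambda>x. r * x + (1 - r) * \<gamma>) \<in> F)"
    thus "SEP (\<lambda>j. m - \<bar>as j\<bar>)" by (elim exE conjE) (erule part_a, assumption)
  qed (rule conjI[OF ifs_attractor_imp_self_similar]; erule part_b)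
qed

end
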